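(* Let $X$ be a topological space. The idempotents of $N(X)$ are precisely the characteristic functions $\chi_U$ with $U$ a regular open subset of $X$, and $U\mapsto\chi_U$ is a boolean isomorphism from the boolean algebra ${\sf RO}(X)$ of regular open subsets of $X$ onto the boolean algebra of idempotents of $N(X)$.
   Context: $B(X)$ is the set of bounded real-valued functions on $X$. For $f\in B(X)$ and $x\in X$, with $\mathcal N_x$ the set of open neighborhoods of $x$: $f_*(x)=\sup\{\inf f[U]\mid U\in\mathcal N_x\}$, $f^*(x)=\inf\{\sup f[U]\mid U\in\mathcal N_x\}$, and $f^\#=(f^* )_*$. $f$ is normal if $f=f^\#$, and $N(X)=\{f\in B(X)\mid f=f^\#\}$. $N(X)$ is a Dedekind complete bounded archimedean $\ell$-algebra whose operations (addition, multiplication, scalar multiplication, binary joins and meets) are the normalizations $(\cdot)^\#$ of the corresponding pointwise operations; in particular positive scalar multiplication and meets are pointwise. The idempotents of a commutative ring form a boolean algebra with $e\wedge f=ef$, $e\vee f=e+f-ef$, $\lnot e=1-e$. A set $U$ is regular open if $U={\sf int}\,{\sf cl}(U)$. *)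

theory Defs
  imports "HOL-Analysis.Analysis"
begin

text \<open>The space X is the (arbitrary) topological space given by the type 'a.\<close>

definition bdd_fun :: "('a \<Rightarrow> real) \<Rightarrow> bool" where
  "bdd_fun f \<longleftrightarrow> (\<exists>M. \<forall>x. \<bar>f x\<bar> \<le> M)"

definition lower_fn :: "('a::topological_space \<Rightarrow> real) \<Rightarrow> 'a \<Rightarrow> real" where
  "lower_fn f x = (SUP U \<in> {U. open U \<and> x \<in> U}. INF y \<in> U. f y)"

definition upper_fn :: "('a::topological_space \<Rightarrow> real) \<Rightarrow> 'a \<Rightarrow> real" where
  "upper_fn f x = (INF U \<in> {U. open U \<and> x \<in> U}. SUP y \<in> U. f y)"

definition normalize :: "('a::topological_space \<Rightarrow> real) \<Rightarrow> 'a \<Rightarrow> real" where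
  "normalize f = lower_fn (upper_fn f)"

definition normal_funs :: "('a::topological_space \<Rightarrow> real) set" where
  "normal_funs = {f. bdd_fun f \<and> normalize f = f}"

definition N_add :: "('a::topological_space \<Rightarrow> real) \<Rightarrow> ('a \<Rightarrow> real) \<Rightarrow> 'a \<Rightarrow> real" where
  "N_add f g = normalize (\<lambda>x. f x + g x)"

definition N_sub :: "('a::topological_space \<Rightarrow> real) \<Rightarrow> ('a \<Rightarrow> real) \<Rightarrow> 'a \<Rightarrow> real" where
  "N_sub f g = normalize (\<lambda>x. f x - g x)"

definition N_mult :: "('a::topological_space \<Rightarrow> real) \<Rightarrow> ('a \<Rightarrow> real) \<Rightarrow> 'a \<Rightarrow> real" where
  "N_mult f g = normalize (\<lambda>x. f x * g x)"

definition regular_open :: "'a::topological_space set \<Rightarrow> bool" where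
  "regular_open U \<longleftrightarrow> U = interior (closure U)"

definition N_idempotents :: "('a::topological_space \<Rightarrow> real) set" where
  "N_idempotents = {e \<in> normal_funs. N_mult e e = e}"

end

theory Submission
  imports Defs
begin

text \<open>Normalization \<open>f \<mapsto> (f\<^sup>*)\<^sub>*\<close> commutes with every monotone continuous map
  \<open>\<phi> : \<real> \<rightarrow> \<real>\<close>, and for nested sets \<open>A \<subseteq> B\<close> it sends \<open>\<chi>\<^sub>A + \<chi>\<^sub>B\<close> to
  \<open>\<chi>\<^bsub>int cl A\<^esub> + \<chi>\<^bsub>int cl B\<^esub>\<close>. Applied to \<open>t \<mapsto> max t 0\<close> and
  \<open>t \<mapsto> (max t 0)\<^sup>2\<close>, the first fact shows that a normal idempotent \<open>e = (e\<^sup>2)\<^sup>#\<close> is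
  nonnegative and then equal to \<open>e\<^sup>2\<close>, hence a characteristic function \<open>\<chi>\<^sub>U\<close>; and
  \<open>\<chi>\<^sub>U\<close> is normal iff \<open>U = int cl U\<close>. The second fact computes the boolean operations,
  since \<open>\<chi>\<^sub>U \<chi>\<^sub>V = \<chi>\<^bsub>U \<inter> V\<^esub>\<close>, \<open>\<chi>\<^sub>U + \<chi>\<^sub>V = \<chi>\<^bsub>U \<inter> V\<^esub> + \<chi>\<^bsub>U \<union> V\<^esub>\<close>
  and \<open>1 - \<chi>\<^sub>U = \<chi>\<^bsub>-U\<^esub>\<close>.\<close>

lemma bdd_image_if_abs_le:
  fixes f :: "'b \<Rightarrow> real"
  assumes "\<And>x. x \<in> U \<Longrightarrow> \<bar>f x\<bar> \<le> M"
  shows "bdd_below (f ` U)" "bdd_above (f ` U)"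
  using assms by (metis abs_le_D2 minus_le_iff bdd_belowI2, metis abs_le_D1 bdd_aboveI2)

lemma SUP_uminus_real: "(SUP y\<in>U. - f y) = - (INF y\<in>U. f y :: real)"
  by (simp add: Inf_real_def image_image)

lemma abs_INF_le:
  fixes f :: "'b \<Rightarrow> real"
  assumes M: "\<And>x. x \<in> U \<Longrightarrow> \<bar>f x\<bar> \<le> M" and "U \<noteq> {}"
  shows "\<bar>INF y\<in>U. f y\<bar> \<le> M"
proof -
  obtain z where z: "z \<in> U" using \<open>U \<noteq> {}\<close> by blast
  have "(INF y\<in>U. f y) \<le> f z"
    by (rule cINF_lower[OF bdd_image_if_abs_le(1)[of U f M, OF M] z])
  moreover have "-M \<le> (INF y\<in>U. f y)"
  proof (rule cINF_greatest[OF \<open>U \<noteq> {}\<close>])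
    fix y assume "y \<in> U"
    then show "-M \<le> f y" using M[of y] by linarith
  qed
  ultimately show ?thesis using M[OF z] by (simp add: abs_le_iff)
qed

lemma abs_SUP_le:
  fixes f :: "'b \<Rightarrow> real"
  assumes "\<And>x. x \<in> U \<Longrightarrow> \<bar>f x\<bar> \<le> M" and "U \<noteq> {}"
  shows "\<bar>SUP y\<in>U. f y\<bar> \<le> M"
  using abs_INF_le[of U "\<lambda>y. - f y" M] assms SUP_uminus_real[of "\<lambda>y. - f y" U] by simp

text \<open>No boundedness is needed: for reals, \<^const>\<open>Inf\<close> is defined as \<open>- Sup (uminus ` X)\<close>.\<close>

lemma upper_fn_uminus: "upper_fn (\<lambda>y. - f y) x = - lower_fn f x"
  unfolding upper_fn_def lower_fn_def SUP_uminus_real by (simp add: Inf_real_def image_image)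

lemma abs_lower_fn_le:
  fixes f :: "'a::topological_space \<Rightarrow> real"
  assumes "\<And>y. \<bar>f y\<bar> \<le> M"
  shows "\<bar>lower_fn f x\<bar> \<le> M"
  unfolding lower_fn_def using assms by (intro abs_SUP_le abs_INF_le) auto

lemma abs_upper_fn_le:
  fixes f :: "'a::topological_space \<Rightarrow> real"
  assumes "\<And>y. \<bar>f y\<bar> \<le> M"
  shows "\<bar>upper_fn f x\<bar> \<le> M"
  using upper_fn_uminus[of "\<lambda>y. - f y" x] abs_lower_fn_le[of "\<lambda>y. - f y" M x] assms by simp

lemma lower_fn_comp_mono:
  fixes f :: "'a::topological_space \<Rightarrow> real" and \<phi> :: "real \<Rightarrow> real"
  assumes M: "\<And>y. \<bar>f y\<bar> \<le> M" and "mono \<phi>" and cont: "\<And>t. isCont \<phi> t"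
  shows "lower_fn (\<lambda>y. \<phi> (f y)) x = \<phi> (lower_fn f x)"
proof -
  let ?N = "{U. open U \<and> x \<in> U}"
  have \<phi>_Inf: "\<phi> (Inf S) = (INF s\<in>S. \<phi> s)" if "S \<noteq> {}" "bdd_below S" for S
    using continuous_at_Inf_mono[OF \<open>mono \<phi>\<close> continuous_at_imp_continuous_at_within[OF cont] that] .
  have \<phi>_Sup: "\<phi> (Sup S) = (SUP s\<in>S. \<phi> s)" if "S \<noteq> {}" "bdd_above S" for S
    using continuous_at_Sup_mono[OF \<open>mono \<phi>\<close> continuous_at_imp_continuous_at_within[OF cont] that] .
  have "(INF y\<in>U. \<phi> (f y)) = \<phi> (INF y\<in>U. f y)" if "U \<in> ?N" for U
  proof -
    have "U \<noteq> {}" using that by blast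
    then show ?thesis using \<phi>_Inf[of "f ` U"] bdd_image_if_abs_le(1)[of U f M] M by (simp add: image_image)
  qed
  then have "lower_fn (\<lambda>y. \<phi> (f y)) x = (SUP U\<in>?N. \<phi> (INF y\<in>U. f y))"
    unfolding lower_fn_def by (intro SUP_cong) auto
  also have "\<dots> = \<phi> (lower_fn f x)"
    unfolding lower_fn_def using M
    by (subst \<phi>_Sup) (auto simp: image_image intro!: bdd_image_if_abs_le(2) abs_INF_le)
  finally show ?thesis .
qed

lemma upper_fn_comp_mono:
  fixes f :: "'a::topological_space \<Rightarrow> real" and \<phi> :: "real \<Rightarrow> real"
  assumes M: "\<And>y. \<bar>f y\<bar> \<le> M" and "mono \<phi>" and "\<And>t. isCont \<phi> t"
  shows "upper_fn (\<lambda>y. \<phi> (f y)) x = \<phi> (upper_fn f x)"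
proof -
  let ?\<psi> = "\<lambda>t. - \<phi> (- t)"
  have "mono ?\<psi>" using \<open>mono \<phi>\<close> by (auto simp: mono_def)
  moreover have "isCont ?\<psi> t" for t
    by (rule isCont_minus, rule isCont_o2[where f=uminus and g=\<phi>]) (auto intro: continuous_intros assms(3))
  ultimately have "lower_fn (\<lambda>y. ?\<psi> (- f y)) x = ?\<psi> (lower_fn (\<lambda>y. - f y) x)"
    using M by (intro lower_fn_comp_mono[of _ M]) auto
  then show ?thesis
    using upper_fn_uminus[of "\<lambda>y. - \<phi> (f y)" x] upper_fn_uminus[of "\<lambda>y. - f y" x] by simp
qed

lemma normalize_comp_mono:
  fixes f :: "'a::topological_space \<Rightarrow> real" and \<phi> :: "real \<Rightarrow> real"
  assumes M: "\<And>y. \<bar>f y\<bar> \<le> M" and "mono \<phi>" and "\<And>t. isCont \<phi> t"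
  shows "normalize (\<lambda>y. \<phi> (f y)) = (\<lambda>y. \<phi> (normalize f y))"
proof -
  have "upper_fn (\<lambda>y. \<phi> (f y)) = (\<lambda>y. \<phi> (upper_fn f y))"
    using upper_fn_comp_mono[of f M \<phi>] assms by auto
  moreover have "lower_fn (\<lambda>y. \<phi> (upper_fn f y)) = (\<lambda>y. \<phi> (lower_fn (upper_fn f) y))"
    using lower_fn_comp_mono[of "upper_fn f" M \<phi>] abs_upper_fn_le[of f M] assms by auto
  ultimately show ?thesis unfolding normalize_def by simp
qed

lemma lower_fn_eqI:
  fixes f :: "'a::topological_space \<Rightarrow> real"
  assumes M: "\<And>y. \<bar>f y\<bar> \<le> M"
    and U: "open U" "x \<in> U" "\<And>y. y \<in> U \<Longrightarrow> c \<le> f y"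
    and below: "\<And>V. open V \<Longrightarrow> x \<in> V \<Longrightarrow> \<exists>y\<in>V. f y \<le> c"
  shows "lower_fn f x = c"
  unfolding lower_fn_def
proof (rule antisym)
  show "(SUP V\<in>{V. open V \<and> x \<in> V}. INF y\<in>V. f y) \<le> c"
  proof (rule cSUP_least)
    fix V assume "V \<in> {V. open V \<and> x \<in> V}"
    then obtain y where "y \<in> V" "f y \<le> c" using below by blast
    then show "(INF y\<in>V. f y) \<le> c" using bdd_image_if_abs_le(1)[of V f M] M by (meson cINF_lower2)
  qed auto
  have "c \<le> (INF y\<in>U. f y)" using U by (intro cINF_greatest) auto
  moreover have "bdd_above ((\<lambda>V. INF y\<in>V. f y) ` {V. open V \<and> x \<in> V})"
    using M by (intro bdd_image_if_abs_le(2) abs_INF_le) auto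
  ultimately show "c \<le> (SUP V\<in>{V. open V \<and> x \<in> V}. INF y\<in>V. f y)"
    using U by (intro cSUP_upper2[where x=U]) auto
qed

lemma lower_fn_indicator_add:
  assumes "A \<subseteq> B"
  shows "lower_fn (\<lambda>y. indicator A y + indicator B y :: real)
    = (\<lambda>y::'a::topological_space. indicator (interior A) y + indicator (interior B) y)"
proof
  fix x :: 'a
  let ?f = "\<lambda>y. indicator A y + indicator B y :: real"
  have M: "\<bar>?f y\<bar> \<le> 2" for y by (simp add: indicator_def)
  have "interior A \<subseteq> interior B" using assms by (rule interior_mono)
  then consider "x \<in> interior A" | "x \<notin> interior A" "x \<in> interior B" | "x \<notin> interior B" "x \<notin> interior A"
    by blast
  then show "lower_fn ?f x = indicator (interior A) x + indicator (interior B) x"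
  proof cases
    case 1
    have "lower_fn ?f x = 2"
      using 1 assms interior_subset[of A]
      by (intro lower_fn_eqI[OF M, of "interior A"]) (auto simp: indicator_def subset_iff)
    with 1 \<open>interior A \<subseteq> interior B\<close> show ?thesis by auto
  next
    case 2
    have "lower_fn ?f x = 1"
    proof (rule lower_fn_eqI[OF M, of "interior B"])
      fix V assume "open V" "x \<in> V"
      then obtain y where "y \<in> V" "y \<notin> A" using 2(1) interiorI by blast
      then show "\<exists>y\<in>V. ?f y \<le> 1" by (auto simp: indicator_def)
    qed (use 2 interior_subset[of B] in auto)
    with 2 show ?thesis by simp
  next
    case 3
    have "lower_fn ?f x = 0"
    proof (rule lower_fn_eqI[OF M, of UNIV])
      fix V assume "open V" "x \<in> V"
      then obtain y where "y \<in> V" "y \<notin> B" using 3(1) interiorI by blast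
      then show "\<exists>y\<in>V. ?f y \<le> 0" using assms by (auto simp: indicator_def)
    qed auto
    with 3 show ?thesis by simp
  qed
qed

lemma upper_fn_indicator_add:
  assumes "A \<subseteq> B"
  shows "upper_fn (\<lambda>y. indicator A y + indicator B y :: real)
    = (\<lambda>y::'a::topological_space. indicator (closure A) y + indicator (closure B) y)"
proof
  fix x :: 'a
  let ?g = "\<lambda>y. indicator (- B) y + indicator (- A) y :: real"
  have "(\<lambda>y. indicator A y + indicator B y :: real) = (\<lambda>y. - (?g y - 2))"
    by (simp add: fun_eq_iff indicator_compl)
  then have "upper_fn (\<lambda>y. indicator A y + indicator B y :: real) x = - lower_fn (\<lambda>y. ?g y - 2) x"
    by (simp only: upper_fn_uminus)
  also have "\<dots> = - (lower_fn ?g x - 2)"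
    by (subst lower_fn_comp_mono[where M=2]) (auto simp: indicator_def mono_def intro: continuous_intros)
  also have "\<dots> = indicator (closure A) x + indicator (closure B) x"
    using assms by (subst lower_fn_indicator_add) (auto simp: interior_complement indicator_compl)
  finally show "upper_fn (\<lambda>y. indicator A y + indicator B y :: real) x
      = indicator (closure A) x + indicator (closure B) x" .
qed

lemma normalize_indicator_add:
  assumes "A \<subseteq> B"
  shows "normalize (\<lambda>y. indicator A y + indicator B y :: real)
    = (\<lambda>y::'a::topological_space. indicator (interior (closure A)) y + indicator (interior (closure B)) y)"
  using assms closure_mono[OF assms]
  by (simp add: normalize_def upper_fn_indicator_add lower_fn_indicator_add)

lemma normalize_indicator:
  "normalize (indicator A :: 'a::topological_space \<Rightarrow> real) = indicator (interior (closure A))"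
  using normalize_indicator_add[of "{}" A] by simp

lemma indicator_eq_indicator_iff: "(indicator U :: 'b \<Rightarrow> real) = indicator V \<longleftrightarrow> U = V"
  by (metis indicator_eq_0_iff subset_antisym subset_eq)

lemma normalize_indicator_eq_iff:
  "normalize (indicator U :: 'a::topological_space \<Rightarrow> real) = indicator U \<longleftrightarrow> regular_open U"
  by (simp add: normalize_indicator indicator_eq_indicator_iff regular_open_def eq_commute)

lemma regular_open_interior_closure: "regular_open (interior (closure S))"
proof -
  have "interior (closure S) \<subseteq> interior (closure (interior (closure S)))"
    by (intro interior_maximal closure_subset) simp
  moreover have "interior (closure (interior (closure S))) \<subseteq> interior (closure S)"
    by (intro interior_mono closure_minimal interior_subset) simp
  ultimately show ?thesis unfolding regular_open_def by blast
qed

lemma regular_open_imp_open: "regular_open U \<Longrightarrow> open U"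
  unfolding regular_open_def by (metis open_interior)

lemma interior_closure_Int_regular_open:
  assumes "regular_open U" "regular_open V"
  shows "interior (closure (U \<inter> V)) = U \<inter> V"
proof
  have "interior (closure (U \<inter> V)) \<subseteq> interior (closure U) \<inter> interior (closure V)"
    by (intro Int_greatest interior_mono closure_mono) auto
  then show "interior (closure (U \<inter> V)) \<subseteq> U \<inter> V"
    using assms unfolding regular_open_def by blast
  show "U \<inter> V \<subseteq> interior (closure (U \<inter> V))"
    using assms by (intro interior_maximal closure_subset) (auto dest: regular_open_imp_open)
qed

lemma N_idempotent_values:
  assumes "e \<in> N_idempotents"
  shows "e x = 0 \<or> e x = 1"
proof -
  obtain M where M: "\<And>y. \<bar>e y\<bar> \<le> M" and e_normal: "normalize e = e"
    and e_idem: "normalize (\<lambda>y. e y * e y) = e"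
    using assms unfolding N_idempotents_def normal_funs_def bdd_fun_def N_mult_def by blast
  have "\<bar>e y * e y\<bar> \<le> M * M" for y
    unfolding abs_mult by (rule mult_mono) (use M[of y] in auto)
  then have "normalize (\<lambda>y. max (e y * e y) 0) = (\<lambda>y. max (normalize (\<lambda>y. e y * e y) y) 0)"
    by (intro normalize_comp_mono[where M="M * M"]) (auto simp: mono_def intro: continuous_intros)
  moreover have "(\<lambda>y. max (e y * e y) 0) = (\<lambda>y. e y * e y)"
    by (simp add: fun_eq_iff max_absorb1)
  ultimately have "e = (\<lambda>y. max (e y) 0)"
    using e_idem by simp
  then have nonneg: "0 \<le> e y" for y
    by (metis max.cobounded2)
  have "normalize (\<lambda>y. (max (e y) 0)\<^sup>2) = (\<lambda>y. (max (normalize e y) 0)\<^sup>2)"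
    using M by (intro normalize_comp_mono[where M=M])
      (auto simp: mono_def intro!: power_mono continuous_intros)
  then have "e y * e y = e y" for y
    using e_idem e_normal nonneg by (simp add: power2_eq_square max_absorb1 fun_eq_iff)
  then show ?thesis by (metis mult_cancel_left1 mult_zero_left)
qed

lemma N_idempotents_eq_indicators:
  "N_idempotents = (\<lambda>U. indicator U :: 'a::topological_space \<Rightarrow> real) ` {U. regular_open U}"
proof (intro equalityI subsetI)
  fix e :: "'a \<Rightarrow> real" assume e: "e \<in> N_idempotents"
  define U where "U = {x. e x = 1}"
  have "e = indicator U"
    using N_idempotent_values[OF e] by (force simp: fun_eq_iff U_def indicator_def)
  moreover have "regular_open U"
    using e \<open>e = indicator U\<close> by (simp add: N_idempotents_def normal_funs_def normalize_indicator_eq_iff)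
  ultimately show "e \<in> (\<lambda>U. indicator U) ` {U. regular_open U}" by blast
next
  fix e :: "'a \<Rightarrow> real" assume "e \<in> (\<lambda>U. indicator U) ` {U. regular_open U}"
  then obtain U where "regular_open U" "e = indicator U" by blast
  moreover have "(\<lambda>x. indicator U x * indicator U x :: real) = indicator U"
    by (simp add: fun_eq_iff indicator_def)
  ultimately show "e \<in> N_idempotents"
    by (auto simp: N_idempotents_def normal_funs_def bdd_fun_def N_mult_def normalize_indicator_eq_iff
        intro: indicator_abs_le_1)
qed

lemma N_mult_indicator_regular_open:
  assumes "regular_open U" "regular_open V"
  shows "N_mult (indicator U) (indicator V) = (indicator (U \<inter> V) :: 'a::topological_space \<Rightarrow> real)"
  using assms by (simp add: N_mult_def indicator_inter_arith[symmetric] normalize_indicator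
      interior_closure_Int_regular_open)

lemma N_join_indicator_regular_open:
  assumes "regular_open U" "regular_open V"
  shows "N_sub (N_add (indicator U) (indicator V)) (N_mult (indicator U) (indicator V))
    = (indicator (interior (closure (U \<union> V))) :: 'a::topological_space \<Rightarrow> real)"
proof -
  have sum_eq: "(\<lambda>x. indicator U x + indicator V x :: real)
      = (\<lambda>x. indicator (U \<inter> V) x + indicator (U \<union> V) x)"
    by (simp add: fun_eq_iff indicator_def)
  have "N_add (indicator U) (indicator V)
      = (\<lambda>x. indicator (U \<inter> V) x + indicator (interior (closure (U \<union> V))) x :: real)"
    unfolding N_add_def sum_eq normalize_indicator_add[of "U \<inter> V" "U \<union> V", OF Int_lower1[THEN le_supI1]]
    by (simp only: interior_closure_Int_regular_open[OF assms])
  then show ?thesis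
    using normalize_indicator_eq_iff[THEN iffD2, OF regular_open_interior_closure[of "U \<union> V"]]
    by (simp add: N_sub_def N_mult_indicator_regular_open[OF assms] del: closure_Un)
qed

lemma N_compl_indicator_regular_open:
  assumes "regular_open U"
  shows "N_sub (\<lambda>_. 1) (indicator U) = (indicator (interior (- U)) :: 'a::topological_space \<Rightarrow> real)"
proof -
  have "closure (- U) = - U"
    using regular_open_imp_open[OF assms] by (simp add: closed_open)
  then show ?thesis
    by (simp add: N_sub_def indicator_compl[symmetric] normalize_indicator)
qed

theorem mainTheorem11:
  shows "N_idempotents = (\<lambda>U. indicator U :: 'a::topological_space \<Rightarrow> real) ` {U. regular_open U}
    \<and> bij_betw (\<lambda>U. indicator U :: 'a \<Rightarrow> real) {U. regular_open U} N_idempotents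
    \<and> (\<forall>U V::'a set. regular_open U \<longrightarrow> regular_open V \<longrightarrow>
           indicator (U \<inter> V) = N_mult (indicator U) (indicator V)
         \<and> indicator (interior (closure (U \<union> V))) =
             N_sub (N_add (indicator U) (indicator V)) (N_mult (indicator U) (indicator V)))
    \<and> (\<forall>U::'a set. regular_open U \<longrightarrow>
           indicator (interior (- U)) = N_sub (\<lambda>_. 1) (indicator U))"
proof (intro conjI allI impI)
  show "bij_betw (\<lambda>U. indicator U :: 'a \<Rightarrow> real) {U. regular_open U} N_idempotents"
    unfolding bij_betw_def N_idempotents_eq_indicators
    by (auto intro: inj_onI simp: indicator_eq_indicator_iff)
next
  fix U V :: "'a set" assume "regular_open U" "regular_open V"
  then show "indicator (U \<inter> V) = N_mult (indicator U) (indicator V)"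
    and "indicator (interior (closure (U \<union> V))) =
      N_sub (N_add (indicator U) (indicator V)) (N_mult (indicator U) (indicator V))"
    by (rule N_mult_indicator_regular_open[symmetric] N_join_indicator_regular_open[symmetric])+
qed (simp_all add: N_idempotents_eq_indicators N_compl_indicator_regular_open)

end
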